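(* Let $G \subset \mathrm{Diff}^1_+(\mathbb{S}^2)$ be a group with $\mathrm{M\ddot{o}b}(\mathbb{S}^2)\subsetneq G$. Then there exist $0<\lambda<1$ and a family $(g_t)_{t\in[0,1]}$ with $g_t\in G_2$ for all $t$, $g_0=\mathrm{id}$, and $t\mapsto g_t$ continuous in the $C^1$ topology, such that: (1) for every $t>0$, $Dg_t(\mathbf{0})$ is a hyperbolic saddle (real eigenvalues $\mu_t,\mu_t^{-1}$ with $0<\mu_t<1$) whose stable (contracting) direction is the tangent line $T_{\mathbf{0}}\Gamma$; (2) $Dg_1(\mathbf{0})=\mathrm{diag}(\lambda,\lambda^{-1})$ with respect to the canonical basis of $T_{\mathbf{0}}\mathbb{S}^2$.
   Context: $\mathbb{S}^2$ is identified with $\mathbb{C}\cup\{\infty\}$ by stereographic projection from the North Pole $\mathbf{\infty}$; $\mathbf{0}$ is the South Pole (origin), $\mathbf{1}$ is the point corresponding to $1\in\mathbb{R}$, and $\Gamma$ is the meridian through $\mathbf{0},\mathbf{1},\mathbf{\infty}$, i.e. the image of $\mathbb{R}\cup\{\infty\}$; $T_{\mathbf{0}}\Gamma$ corresponds to the $x$-axis, spanned by $\partial/\partial x$, in $T_{\mathbf{0}}\mathbb{S}^2\cong\mathbb{R}^2$. $\mathrm{Diff}^1_+(\mathbb{S}^2)$ is the group of orientation-preserving $C^1$ diffeomorphisms; $\mathrm{M\ddot{o}b}(\mathbb{S}^2)$ is the group of maps $z\mapsto (az+b)/(cz+d)$, $ad-bc=1$. $G_2=\{g\in G: g(\mathbf{0})=\mathbf{0},\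 g(\mathbf{\infty})=\mathbf{\infty}\}$. *)

theory Defs
  imports "HOL-Analysis.Analysis"
begin

text \<open>The sphere S^2 is modelled as the Riemann sphere C \<union> {\<infinity>} = complex option,
  with None the North Pole \<infinity> and Some 0 the South Pole.\<close>

type_synonym sphere = "complex option"

fun chart :: "bool \<Rightarrow> sphere \<Rightarrow> complex" where
  "chart True (Some z) = z"
| "chart True None = 0"
| "chart False (Some z) = 1 / z"
| "chart False None = 0"

fun cdom :: "bool \<Rightarrow> sphere set" where
  "cdom True = range Some"
| "cdom False = insert None (Some ` (- {0}))"

fun cinv :: "bool \<Rightarrow> complex \<Rightarrow> sphere" where
  "cinv True w = Some w"
| "cinv False w = (if w = 0 then None else Some (1 / w))"

definition locrep :: "bool \<Rightarrow> bool \<Rightarrow> (sphere \<Rightarrow> sphere) \<Rightarrow> complex \<Rightarrow> complex" where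
  "locrep a b g = (\<lambda>w. chart b (g (cinv a w)))"

definition repdom :: "bool \<Rightarrow> bool \<Rightarrow> (sphere \<Rightarrow> sphere) \<Rightarrow> complex set" where
  "repdom a b g = {w. g (cinv a w) \<in> cdom b}"

definition C1_map :: "(sphere \<Rightarrow> sphere) \<Rightarrow> bool" where
  "C1_map g \<longleftrightarrow> (\<forall>a b. open (repdom a b g)
      \<and> (\<forall>w\<in>repdom a b g. locrep a b g differentiable (at w))
      \<and> (\<forall>v\<in>{1, \<i>}. continuous_on (repdom a b g)
            (\<lambda>w. frechet_derivative (locrep a b g) (at w) v)))"

definition jdet :: "(complex \<Rightarrow> complex) \<Rightarrow> real" where
  "jdet L = Re (L 1) * Im (L \<i>) - Im (L 1) * Re (L \<i>)"

definition Diff1_plus :: "(sphere \<Rightarrow> sphere) set" where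
  "Diff1_plus = {g. bij g \<and> C1_map g \<and> C1_map (inv g)
      \<and> (\<forall>a b. \<forall>w\<in>repdom a b g. jdet (frechet_derivative (locrep a b g) (at w)) > 0)}"

fun mobius :: "complex \<Rightarrow> complex \<Rightarrow> complex \<Rightarrow> complex \<Rightarrow> sphere \<Rightarrow> sphere" where
  "mobius a b c d None = (if c = 0 then None else Some (a / c))"
| "mobius a b c d (Some z) =
     (if c * z + d = 0 then None else Some ((a * z + b) / (c * z + d)))"

definition Mob :: "(sphere \<Rightarrow> sphere) set" where
  "Mob = {mobius a b c d | a b c d. a * d - b * c = 1}"

definition is_group_of_maps :: "(sphere \<Rightarrow> sphere) set \<Rightarrow> bool" where
  "is_group_of_maps G \<longleftrightarrow> id \<in> G \<and> (\<forall>f\<in>G. \<forall>g\<in>G. f \<circ> g \<in> G) \<and> (\<forall>g\<in>G. inv g \<in> G)"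

definition G2 :: "(sphere \<Rightarrow> sphere) set \<Rightarrow> (sphere \<Rightarrow> sphere) set" where
  "G2 G = {g \<in> G. g (Some 0) = Some 0 \<and> g None = None}"

text \<open>Continuity of a family of maps in the (compact-open) C^1 topology: uniform convergence
  of local representatives and their partial derivatives on compact subsets of chart domains.\<close>
definition C1_continuous_on :: "real set \<Rightarrow> (real \<Rightarrow> sphere \<Rightarrow> sphere) \<Rightarrow> bool" where
  "C1_continuous_on S g \<longleftrightarrow> (\<forall>t0\<in>S. \<forall>a b K. compact K \<and> K \<subseteq> repdom a b (g t0) \<longrightarrow>
      (\<forall>\<^sub>F t in at t0 within S. K \<subseteq> repdom a b (g t))
      \<and> uniform_limit K (\<lambda>t. locrep a b (g t)) (locrep a b (g t0)) (at t0 within S)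
      \<and> (\<forall>v\<in>{1, \<i>}. uniform_limit K
            (\<lambda>t w. frechet_derivative (locrep a b (g t)) (at w) v)
            (\<lambda>w. frechet_derivative (locrep a b (g t0)) (at w) v) (at t0 within S)))"

text \<open>Derivative at the South Pole 0, in the chart z (canonical basis 1 = d/dx, i = d/dy).\<close>
definition D0 :: "(sphere \<Rightarrow> sphere) \<Rightarrow> complex \<Rightarrow> complex" where
  "D0 g = frechet_derivative (locrep True True g) (at 0)"

end

theory Submission
  imports Defs "HOL-Complex_Analysis.Complex_Analysis"
begin

text \<open>If every element of \<open>G\<^sub>2\<close> were conformal at \<open>0\<close>, conjugation by translations would make
  every element of \<open>G\<close> fixing \<open>\<infinity>\<close> holomorphic on \<open>\<complex>\<close> with linear growth (read off in the
  chart at \<open>\<infinity>\<close>), hence affine by Liouville, and \<open>G\<close> would consist of M\<ouml>bius maps.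
  So some \<open>h \<in> G\<^sub>2\<close> is not conformal at \<open>0\<close>; composing with scalings makes
  \<open>Dh(0) = diag(a, d)\<close> with \<open>0 < a < d\<close>. Let \<open>r\<^sub>t\<close> be the rotation by \<open>t\<pi>/2\<close>. The
  derivative of \<open>h\<^sup>-\<^sup>1 \<circ> r\<^sub>t \<circ> h\<close> is unimodular and sends \<open>1\<close> to
  \<open>w\<^sub>t = (cos (t\<pi>/2), (a/d) sin (t\<pi>/2))\<close>; following it by the rotation taking \<open>w\<^sub>t\<close> to
  \<open>|w\<^sub>t|\<close> gives an upper triangular derivative with eigenvalues \<open>|w\<^sub>t| < 1\<close> and
  \<open>1/|w\<^sub>t|\<close>, which is \<open>diag(a/d, d/a)\<close> at \<open>t = 1\<close>.\<close>

definition affine_map :: "complex \<Rightarrow> complex \<Rightarrow> sphere \<Rightarrow> sphere" where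
  "affine_map \<alpha> \<beta> = map_option (\<lambda>z. \<alpha> * z + \<beta>)"

definition scaling :: "complex \<Rightarrow> sphere \<Rightarrow> sphere" where
  "scaling c = map_option (\<lambda>z. c * z)"

lemma affine_map_simps [simp]:
  "affine_map \<alpha> \<beta> None = None" "affine_map \<alpha> \<beta> (Some z) = Some (\<alpha> * z + \<beta>)"
  by (simp_all add: affine_map_def)

lemma scaling_simps [simp]: "scaling c None = None" "scaling c (Some z) = Some (c * z)"
  by (simp_all add: scaling_def)

lemma scaling_1 [simp]: "scaling 1 = id"
  by (simp add: scaling_def fun_eq_iff option.map_ident)

lemma mobius_in_Mob: "a * d - b * c = 1 \<Longrightarrow> mobius a b c d \<in> Mob"
  unfolding Mob_def by blast

lemma affine_map_in_Mob:
  assumes "\<alpha> \<noteq> 0"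
  shows "affine_map \<alpha> \<beta> \<in> Mob"
proof -
  define A where "A = csqrt \<alpha>"
  have A: "A \<noteq> 0" "A * A = \<alpha>"
    using assms by (auto simp: A_def power2_eq_square[symmetric])
  have "affine_map \<alpha> \<beta> = mobius A (\<beta> / A) 0 (1 / A)"
  proof
    fix x show "affine_map \<alpha> \<beta> x = mobius A (\<beta> / A) 0 (1 / A) x"
      using A by (cases x) (auto simp: field_simps)
  qed
  then show ?thesis
    using mobius_in_Mob[of A "1 / A" "\<beta> / A" 0] A by simp
qed

lemma scaling_in_Mob: "c \<noteq> 0 \<Longrightarrow> scaling c \<in> Mob"
  using affine_map_in_Mob[of c 0] by (simp add: scaling_def affine_map_def)

lemma inversion_comp_affine_map_in_Mob:
  assumes "\<alpha> \<noteq> 0"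
  shows "mobius p (-1) 1 0 \<circ> affine_map \<alpha> \<beta> \<in> Mob"
proof -
  define A where "A = csqrt \<alpha>"
  define B where "B = \<beta> / A"
  have A: "A \<noteq> 0" and ab: "\<alpha> = A * A" "\<beta> = A * B"
    using assms by (auto simp: A_def B_def power2_eq_square[symmetric])
  have "mobius p (-1) 1 0 \<circ> affine_map \<alpha> \<beta> = mobius (p * A) (p * B - 1 / A) A B"
  proof
    fix x show "(mobius p (-1) 1 0 \<circ> affine_map \<alpha> \<beta>) x = mobius (p * A) (p * B - 1 / A) A B x"
    proof (cases x)
      case (Some z)
      have "A * B + A * (A * z) = 0 \<longleftrightarrow> B + A * z = 0"
        using A by (metis distrib_left mult_eq_0_iff)
      then show ?thesis
        using A by (cases "A * z + B = 0") (simp_all add: Some ab field_simps)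
    qed (use A in simp)
  qed
  moreover have "p * A * B - (p * B - 1 / A) * A = 1" using A by (simp add: field_simps)
  ultimately show ?thesis using mobius_in_Mob by metis
qed

definition pole_fixing :: "(sphere \<Rightarrow> sphere) \<Rightarrow> bool" where
  "pole_fixing k \<longleftrightarrow> bij k \<and> k None = None \<and> k (Some 0) = Some 0"

lemma pole_fixing_None_iff: "pole_fixing k \<Longrightarrow> k x = None \<longleftrightarrow> x = None"
  unfolding pole_fixing_def by (metis bij_def injD)

lemma pole_fixing_Some_0_iff: "pole_fixing k \<Longrightarrow> k x = Some 0 \<longleftrightarrow> x = Some 0"
  unfolding pole_fixing_def by (metis bij_def injD)

lemma pole_fixing_inv: "pole_fixing k \<Longrightarrow> pole_fixing (inv k)"
  unfolding pole_fixing_def by (metis bij_imp_bij_inv bij_def inv_f_eq)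

lemma pole_fixing_comp: "pole_fixing k \<Longrightarrow> pole_fixing l \<Longrightarrow> pole_fixing (k \<circ> l)"
  unfolding pole_fixing_def by (auto intro: bij_comp)

lemma pole_fixing_scaling:
  assumes "c \<noteq> 0"
  shows "pole_fixing (scaling c)"
proof -
  have "bij (scaling c)"
    by (rule bij_betw_byWitness[where f' = "scaling (1 / c)"])
      (use assms in \<open>auto simp: scaling_def option.map_comp o_def option.map_ident\<close>)
  then show ?thesis by (simp add: pole_fixing_def)
qed

lemma G2_imp_pole_fixing: "G \<subseteq> Diff1_plus \<Longrightarrow> h \<in> G2 G \<Longrightarrow> pole_fixing h"
  unfolding G2_def pole_fixing_def Diff1_plus_def by auto

lemma pole_fixing_imp_G2: "h \<in> G \<Longrightarrow> pole_fixing h \<Longrightarrow> h \<in> G2 G"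
  unfolding G2_def pole_fixing_def by auto

lemma pole_fixing_Some: "pole_fixing h \<Longrightarrow> h (Some w) = Some (locrep True True h w)"
  using pole_fixing_None_iff[of h "Some w"] by (cases "h (Some w)") (auto simp: locrep_def)

lemma locrep_pole_fixing_0: "pole_fixing h \<Longrightarrow> locrep True True h 0 = 0"
  by (simp add: locrep_def pole_fixing_def)

lemma cdom_True_iff: "x \<in> cdom True \<longleftrightarrow> x \<noteq> None"
  by (cases x) auto

lemma cdom_False_iff: "x \<in> cdom False \<longleftrightarrow> x \<noteq> Some 0"
  by (cases x) auto

lemma pole_fixing_cinv_in_cdom:
  assumes k: "pole_fixing k"
  shows "k (cinv a w) \<in> cdom a"
proof (cases a)
  case True
  then show ?thesis
    using pole_fixing_None_iff[OF k, of "Some w"] by (simp del: cdom.simps add: cdom_True_iff)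
next
  case False
  then show ?thesis
    using pole_fixing_Some_0_iff[OF k, of "Some (1 / w)"] k
    by (auto simp del: cdom.simps simp: cdom_False_iff pole_fixing_def)
qed

definition chart_overlap :: "bool \<Rightarrow> bool \<Rightarrow> complex set" where
  "chart_overlap a b = (if a = b then UNIV else - {0})"

lemma repdom_pole_fixing: "pole_fixing k \<Longrightarrow> repdom a b k = chart_overlap a b"
proof -
  assume k: "pole_fixing k"
  have "k (cinv a w) \<in> cdom b \<longleftrightarrow> w \<in> chart_overlap a b" for w
  proof (cases "a = b")
    case False
    then show ?thesis
      by (cases a) (auto simp del: cdom.simps simp: cdom_True_iff cdom_False_iff chart_overlap_def
          pole_fixing_None_iff[OF k] pole_fixing_Some_0_iff[OF k])
  qed (use pole_fixing_cinv_in_cdom[OF k] in \<open>simp add: chart_overlap_def\<close>)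
  then show ?thesis by (auto simp: repdom_def)
qed

lemma locrep_diag_nonzero:
  assumes "pole_fixing h" "w \<noteq> 0"
  shows "locrep a a h w \<noteq> 0"
  using assms by (cases a; cases "h (cinv a w)")
    (auto simp: locrep_def pole_fixing_None_iff pole_fixing_Some_0_iff)

section \<open>Real-linear maps of \<open>\<complex>\<close>\<close>

lemma linear_complex_decomp:
  assumes "linear L"
  shows "L x = of_real (Re x) * L 1 + of_real (Im x) * L \<i>"
proof -
  have "x = Re x *\<^sub>R 1 + Im x *\<^sub>R \<i>" by (simp add: complex_eq_iff)
  then have "L x = L (Re x *\<^sub>R 1 + Im x *\<^sub>R \<i>)" by simp
  also have "\<dots> = Re x *\<^sub>R L 1 + Im x *\<^sub>R L \<i>"
    using assms by (simp add: linear_add linear_scale)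
  finally show ?thesis by (simp add: scaleR_conv_of_real)
qed

lemma jdet_compose:
  assumes "linear L" "linear M"
  shows "jdet (L \<circ> M) = jdet L * jdet M"
  unfolding jdet_def o_def
  using linear_complex_decomp[OF assms(1), of "M 1"] linear_complex_decomp[OF assms(1), of "M \<i>"]
  by (simp add: algebra_simps)

lemma jdet_mult_left: "jdet (\<lambda>v. c * v) = (cmod c)\<^sup>2"
  unfolding jdet_def cmod_power2 by (simp add: power2_eq_square)

lemma jdet_pos_imp_norm_lower_bound:
  assumes L: "linear L" and j: "jdet L > 0"
  shows "\<exists>c>0. \<forall>w. c * norm w \<le> norm (L w)"
proof -
  define M where "M = norm (L 1) + norm (L \<i>) + 1"
  have M: "M > 0" unfolding M_def by (smt (verit) norm_ge_zero)
  have key: "norm w * jdet L \<le> M * norm (L w)" for w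
  proof -
    have jd: "jdet L = Im (cnj (L 1) * L \<i>)" unfolding jdet_def by simp
    have "Im (cnj (L 1) * L w) = Im w * jdet L" "Im (cnj (L w) * L \<i>) = Re w * jdet L"
      unfolding jd by (subst (1 2) linear_complex_decomp[OF L], simp add: algebra_simps)+
    then have "\<bar>Im w\<bar> * jdet L \<le> norm (L 1) * norm (L w)"
      and "\<bar>Re w\<bar> * jdet L \<le> norm (L \<i>) * norm (L w)"
      using abs_Im_le_cmod[of "cnj (L 1) * L w"] abs_Im_le_cmod[of "cnj (L w) * L \<i>"] j
      by (simp_all add: abs_mult norm_mult mult.commute)
    moreover have "norm w * jdet L \<le> (\<bar>Re w\<bar> + \<bar>Im w\<bar>) * jdet L"
      using cmod_le j by (intro mult_right_mono) auto
    ultimately have "norm w * jdet L \<le> (norm (L 1) + norm (L \<i>)) * norm (L w)"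
      by (simp add: distrib_right)
    also have "\<dots> \<le> M * norm (L w)" unfolding M_def by (simp add: mult_right_mono)
    finally show ?thesis .
  qed
  show ?thesis
  proof (intro exI[of _ "jdet L / M"] conjI allI)
    show "jdet L / M > 0" using j M by simp
    show "jdet L / M * norm w \<le> norm (L w)" for w
      using key[of w] M by (simp add: field_simps)
  qed
qed

lemma eigenvector_of_real_first_column:
  assumes L: "linear L" and L1: "L 1 = of_real \<mu>" and j: "jdet L = 1"
    and "\<mu> > 0" "\<mu> \<noteq> 1"
  shows "\<exists>v. v \<noteq> 0 \<and> L v = of_real (1 / \<mu>) * v"
proof (intro exI conjI)
  have Im_Li: "Im (L \<i>) = 1 / \<mu>" using j \<open>\<mu> > 0\<close> by (simp add: jdet_def L1 field_simps)
  define v where "v = Complex (Re (L \<i>)) (1 / \<mu> - \<mu>)"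
  have "(\<mu> - 1) * (\<mu> + 1) \<noteq> 0" using assms(4,5) by simp
  then have "1 / \<mu> \<noteq> \<mu>" using assms(4) by (auto simp: field_simps algebra_simps)
  then show "v \<noteq> 0" by (simp add: v_def complex_eq_iff)
  show "L v = of_real (1 / \<mu>) * v"
    using \<open>\<mu> > 0\<close> by (subst linear_complex_decomp[OF L])
      (simp add: v_def L1 Im_Li complex_eq_iff field_simps)
qed

lemma linear_eq_conformal_plus_anticonformal:
  assumes "linear A"
  shows "A x = (A 1 - \<i> * A \<i>) / 2 * x + (A 1 + \<i> * A \<i>) / 2 * cnj x"
  by (subst linear_complex_decomp[OF assms]) (simp add: complex_eq_iff field_simps)

lemma nonconformal_diagonalizable:
  assumes lin: "linear A" and j: "jdet A > 0" and nc: "A \<i> \<noteq> \<i> * A 1"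
  shows "\<exists>\<alpha> \<beta> a d. \<alpha> \<noteq> 0 \<and> \<beta> \<noteq> 0 \<and> 0 < a \<and> a < d
           \<and> \<alpha> * A \<beta> = of_real a \<and> \<alpha> * A (\<beta> * \<i>) = \<i> * of_real d"
proof -
  define p where "p = (A 1 - \<i> * A \<i>) / 2"
  define q where "q = (A 1 + \<i> * A \<i>) / 2"
  have Ax: "A x = p * x + q * cnj x" for x
    unfolding p_def q_def by (rule linear_eq_conformal_plus_anticonformal[OF lin])
  have "q \<noteq> 0"
  proof
    assume "q = 0"
    then have "A 1 = - \<i> * A \<i>" by (simp add: q_def eq_neg_iff_add_eq_0)
    then show False using nc by (simp add: mult.assoc[symmetric])
  qed
  have "jdet A = (cmod p)\<^sup>2 - (cmod q)\<^sup>2"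
    unfolding jdet_def Ax cmod_power2 by (simp add: algebra_simps power2_eq_square)
  then have "(cmod q)\<^sup>2 < (cmod p)\<^sup>2" using j by simp
  then have pq: "0 < cmod q" "cmod q < cmod p"
    using \<open>q \<noteq> 0\<close> by (auto intro: power2_less_imp_less)
  define \<beta> where "\<beta> = csqrt (- q * cnj p)"
  define \<alpha> where "\<alpha> = cnj (\<beta> * p)"
  have \<beta>2: "\<beta> * \<beta> = - q * cnj p" unfolding \<beta>_def by (simp add: power2_eq_square[symmetric])
  have cnj_\<beta>2: "cnj \<beta> * cnj \<beta> = - cnj q * p"
    using arg_cong[OF \<beta>2, of cnj] by simp
  have norm_\<beta>2: "\<beta> * cnj \<beta> = of_real (cmod p * cmod q)"
    using \<beta>2 by (metis complex_norm_square norm_minus_cancel complex_mod_cnj norm_mult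
        mult.commute power2_eq_square of_real_mult)
  have norm_p2: "p * cnj p = of_real ((cmod p)\<^sup>2)" and norm_q2: "q * cnj q = of_real ((cmod q)\<^sup>2)"
    by (simp_all only: complex_norm_square)
  have cross: "(cnj \<beta> * cnj \<beta>) * (cnj p * q) = - of_real ((cmod p)\<^sup>2 * (cmod q)\<^sup>2)"
    unfolding cnj_\<beta>2 of_real_mult norm_p2[symmetric] norm_q2[symmetric] by (simp add: algebra_simps)
  have "\<alpha> * A \<beta> = (\<beta> * cnj \<beta>) * (p * cnj p) + (cnj \<beta> * cnj \<beta>) * (cnj p * q)"
    "\<alpha> * A (\<beta> * \<i>) = \<i> * ((\<beta> * cnj \<beta>) * (p * cnj p) - (cnj \<beta> * cnj \<beta>) * (cnj p * q))"
    unfolding Ax \<alpha>_def by (simp_all add: algebra_simps)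
  then have diag: "\<alpha> * A \<beta> = of_real ((cmod p)\<^sup>2 * cmod q * (cmod p - cmod q))"
    "\<alpha> * A (\<beta> * \<i>) = \<i> * of_real ((cmod p)\<^sup>2 * cmod q * (cmod p + cmod q))"
    unfolding cross norm_\<beta>2 norm_p2 by (simp_all add: algebra_simps power2_eq_square)
  have "0 < (cmod p)\<^sup>2 * cmod q" using pq by (metis mult_pos_pos zero_less_power less_trans)
  then have "0 < (cmod p)\<^sup>2 * cmod q * (cmod p - cmod q)"
    "(cmod p)\<^sup>2 * cmod q * (cmod p - cmod q) < (cmod p)\<^sup>2 * cmod q * (cmod p + cmod q)"
    using pq by (simp_all add: mult_strict_left_mono)
  moreover have "\<beta> \<noteq> 0" "\<alpha> \<noteq> 0" using \<beta>2 \<open>q \<noteq> 0\<close> pq by (auto simp: \<alpha>_def)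
  ultimately show ?thesis using diag by blast
qed

lemma has_field_derivative_of_conformal:
  assumes F: "(F has_derivative D) (at w)" and conf: "D \<i> = \<i> * D 1"
  shows "(F has_field_derivative D 1) (at w)"
proof -
  have lin: "linear D" using F has_derivative_linear by blast
  have "D = (\<lambda>v. D 1 * v)"
  proof
    fix v show "D v = D 1 * v"
      by (subst linear_complex_decomp[OF lin]) (simp add: conf complex_eq_iff algebra_simps)
  qed
  then show ?thesis using F by (simp add: has_field_derivative_def)
qed

lemma Diff1_plusD:
  assumes "h \<in> Diff1_plus"
  shows "bij h"
    "w \<in> repdom a b h \<Longrightarrow> locrep a b h differentiable (at w)"
    "v \<in> {1, \<i>} \<Longrightarrow> continuous_on (repdom a b h) (\<lambda>w. frechet_derivative (locrep a b h) (at w) v)"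
    "w \<in> repdom a b h \<Longrightarrow> jdet (frechet_derivative (locrep a b h) (at w)) > 0"
  using assms unfolding Diff1_plus_def C1_map_def by auto

lemma has_derivative_D0:
  assumes "h \<in> Diff1_plus" "pole_fixing h"
  shows "(locrep True True h has_derivative D0 h) (at 0)"
  using Diff1_plusD(2)[OF assms(1), of 0 True True] repdom_pole_fixing[OF assms(2)]
  by (simp add: chart_overlap_def D0_def frechet_derivative_works)

lemma D0_eqI: "(locrep True True h has_derivative L) (at 0) \<Longrightarrow> D0 h = L"
  unfolding D0_def by (rule frechet_derivative_at[symmetric])

lemma linear_D0: "h \<in> Diff1_plus \<Longrightarrow> pole_fixing h \<Longrightarrow> linear (D0 h)"
  using has_derivative_D0 has_derivative_linear by blast

lemma jdet_D0_pos: "h \<in> Diff1_plus \<Longrightarrow> pole_fixing h \<Longrightarrow> jdet (D0 h) > 0"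
  using Diff1_plusD(4)[of h 0 True True] repdom_pole_fixing[of h True True]
  by (simp add: chart_overlap_def D0_def)

lemma has_derivative_locrep_comp:
  assumes k: "pole_fixing k"
    and F: "(locrep True True f has_derivative F) (at 0)"
    and K: "(locrep True True k has_derivative K) (at 0)"
  shows "(locrep True True (f \<circ> k) has_derivative F \<circ> K) (at 0)"
proof -
  have "locrep True True (f \<circ> k) = (\<lambda>w. locrep True True f (locrep True True k w))"
    by (rule ext) (simp add: locrep_def[of _ _ "f \<circ> k"] locrep_def[of _ _ f] pole_fixing_Some[OF k])
  moreover have "(locrep True True f has_derivative F) (at (locrep True True k 0))"
    using F by (simp add: locrep_pole_fixing_0[OF k])
  ultimately show ?thesis
    unfolding comp_def by (simp only: has_derivative_compose[OF K])
qed

lemma has_derivative_locrep_scaling: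
  "(locrep True True (scaling c) has_derivative (\<lambda>w. c * w)) (at 0)"
proof -
  have "locrep True True (scaling c) = (\<lambda>w. c * w)" by (rule ext) (simp add: locrep_def)
  then show ?thesis by (simp only: has_derivative_mult_right[OF has_derivative_ident])
qed

lemma D0_inv_comp:
  assumes h: "h \<in> Diff1_plus" and ih: "inv h \<in> Diff1_plus" and k: "pole_fixing h"
  shows "D0 (inv h) \<circ> D0 h = id"
proof -
  have "locrep True True (inv h \<circ> h) = id"
    using k by (auto simp: locrep_def pole_fixing_def bij_def)
  moreover have "(locrep True True (inv h \<circ> h) has_derivative D0 (inv h) \<circ> D0 h) (at 0)"
    by (rule has_derivative_locrep_comp[OF k has_derivative_D0 has_derivative_D0])
      (use h ih k pole_fixing_inv in auto)
  ultimately have "(id has_derivative D0 (inv h) \<circ> D0 h) (at 0)" by simp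
  then show ?thesis
    using has_derivative_unique[OF _ has_derivative_id] by blast
qed

section \<open>A group of maps conformal at the South Pole is M\<ouml>bius\<close>

lemma group_of_maps_comp: "is_group_of_maps G \<Longrightarrow> f \<in> G \<Longrightarrow> g \<in> G \<Longrightarrow> f \<circ> g \<in> G"
  by (simp add: is_group_of_maps_def)

lemma group_of_maps_inv: "is_group_of_maps G \<Longrightarrow> g \<in> G \<Longrightarrow> inv g \<in> G"
  by (simp add: is_group_of_maps_def)

lemma conformal_of_G2_conformal:
  assumes grp: "is_group_of_maps G" and mob: "Mob \<subseteq> G"
    and conf: "\<And>h. h \<in> G2 G \<Longrightarrow> D0 h \<i> = \<i> * D0 h 1"
    and kG: "k \<in> G" and kN: "k None = None" and kF: "\<And>z. k (Some z) = Some (F z)"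
    and F: "(F has_derivative D) (at w)"
  shows "D \<i> = \<i> * D 1"
proof -
  define h where "h = affine_map 1 (- F w) \<circ> k \<circ> affine_map 1 w"
  have "h \<in> G"
    unfolding h_def using affine_map_in_Mob mob kG group_of_maps_comp[OF grp]
    by (metis one_neq_zero subsetD)
  then have "h \<in> G2 G" by (simp add: G2_def h_def kF kN)
  have "locrep True True h = (\<lambda>z. F (z + w) + - F w)"
    by (rule ext) (simp add: h_def locrep_def kF)
  moreover have "((\<lambda>z. F (z + w) + - F w) has_derivative D) (at 0)"
    using has_derivative_compose[OF has_derivative_add_const[OF has_derivative_ident, of w], of F D] F
    by (intro has_derivative_add_const) simp
  ultimately have "D0 h = D" by (simp add: D0_eqI)
  then show ?thesis using conf[OF \<open>h \<in> G2 G\<close>] by simp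
qed

text \<open>Read in the chart at \<open>\<infinity>\<close>, the derivative of \<open>k\<close> there is invertible, so \<open>1 / F (1 / y)\<close>
  is at least a constant times \<open>|y|\<close> near \<open>0\<close>.\<close>
lemma linear_growth_of_fixing_infinity:
  assumes kD: "k \<in> Diff1_plus" and kN: "k None = None" and kF: "\<And>z. k (Some z) = Some (F z)"
  shows "\<exists>A B. \<forall>z. A \<le> norm z \<longrightarrow> norm (F z) \<le> B * norm z ^ 1"
proof -
  define K where "K = locrep False False k"
  have r0: "0 \<in> repdom False False k" unfolding repdom_def by (simp add: kN)
  define L where "L = frechet_derivative K (at 0)"
  have hK: "(K has_derivative L) (at 0)"
    unfolding L_def K_def using Diff1_plusD(2)[OF kD r0] frechet_derivative_works by blast
  have "jdet L > 0" using Diff1_plusD(4)[OF kD r0] by (simp add: L_def K_def)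
  then obtain c where c: "c > 0" "\<And>w. c * norm w \<le> norm (L w)"
    using jdet_pos_imp_norm_lower_bound hK has_derivative_linear by blast
  obtain d where d: "d > 0" "\<And>y. norm y < d \<Longrightarrow> norm (K y - K 0 - L y) \<le> c / 2 * norm y"
    using hK c(1) unfolding has_derivative_at_alt by (metis diff_zero half_gt_zero)
  have K0: "K 0 = 0" by (simp add: K_def locrep_def kN)
  have "norm (F z) \<le> 2 / c * norm z ^ 1" if z: "2 / d \<le> norm z" for z
  proof -
    have "z \<noteq> 0" using z d(1) by auto
    define y where "y = 1 / z"
    have "y \<noteq> 0" "norm y = 1 / norm z" using \<open>z \<noteq> 0\<close> by (simp_all add: y_def norm_divide)
    have "1 / norm z \<le> d / 2" using z d(1) \<open>z \<noteq> 0\<close> by (simp add: field_simps)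
    then have "norm y < d" using \<open>norm y = 1 / norm z\<close> d(1) by simp
    then have "norm (K y - L y) \<le> c / 2 * norm y" using d(2) K0 by simp
    moreover have "c * norm y \<le> norm (K y) + norm (K y - L y)"
      using c(2)[of y] norm_triangle_ineq[of "K y" "L y - K y"] by (simp add: norm_minus_commute)
    ultimately have "c / 2 * norm y \<le> norm (K y)" by simp
    moreover have "K y = 1 / F z" using \<open>z \<noteq> 0\<close> by (simp add: K_def locrep_def kF y_def)
    ultimately have ineq: "c / 2 * (1 / norm z) \<le> 1 / norm (F z)"
      using \<open>norm y = 1 / norm z\<close> by (simp add: norm_divide)
    moreover have "0 < c / 2 * (1 / norm z)" using c(1) \<open>z \<noteq> 0\<close> by simp
    ultimately have "F z \<noteq> 0" by auto
    then show ?thesis using ineq c(1) \<open>z \<noteq> 0\<close> by (simp add: field_simps)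
  qed
  then show ?thesis by blast
qed

lemma affine_of_G2_conformal:
  assumes grp: "is_group_of_maps G" and sub: "G \<subseteq> Diff1_plus" and mob: "Mob \<subseteq> G"
    and conf: "\<And>h. h \<in> G2 G \<Longrightarrow> D0 h \<i> = \<i> * D0 h 1"
    and kG: "k \<in> G" and kN: "k None = None"
  shows "\<exists>\<alpha> \<beta>. \<alpha> \<noteq> 0 \<and> k = affine_map \<alpha> \<beta>"
proof -
  have kD: "k \<in> Diff1_plus" using kG sub by auto
  have bk: "bij k" using Diff1_plusD(1)[OF kD] .
  define F where "F = locrep True True k"
  have kS: "k (Some z) \<noteq> None" for z
    using bk kN by (metis bij_def injD option.distinct(1))
  have kF: "k (Some z) = Some (F z)" for z
    using kS[of z] unfolding F_def locrep_def by (cases "k (Some z)") auto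
  have "repdom True True k = UNIV" by (simp add: repdom_def kF)
  then have F': "(F has_derivative frechet_derivative F (at w)) (at w)" for w
    using Diff1_plusD(2)[OF kD, of w True True] frechet_derivative_works by (auto simp: F_def)
  have hol: "F holomorphic_on UNIV"
    unfolding holomorphic_on_def field_differentiable_def
    using has_field_derivative_of_conformal[OF F'
        conformal_of_G2_conformal[OF grp mob conf kG kN kF F']] by blast
  obtain A B where "\<And>z. A \<le> norm z \<Longrightarrow> norm (F z) \<le> B * norm z ^ 1"
    using linear_growth_of_fixing_infinity[OF kD kN kF] by blast
  then have aff: "F z = F 0 + deriv F 0 * z" for z
    using Liouville_polynomial[OF hol, of A B 1 z] by simp
  have "deriv F 0 \<noteq> 0"
  proof
    assume "deriv F 0 = 0"
    then have "k (Some 1) = k (Some 0)" using aff[of 1] by (simp add: kF)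
    then show False using bk by (metis bij_def injD option.inject zero_neq_one)
  qed
  moreover have "k = affine_map (deriv F 0) (F 0)"
  proof
    fix x show "k x = affine_map (deriv F 0) (F 0) x"
    proof (cases x)
      case (Some z)
      then show ?thesis using aff[of z] by (simp add: kF add.commute)
    qed (simp add: kN)
  qed
  ultimately show ?thesis by blast
qed

lemma Mob_of_G2_conformal:
  assumes grp: "is_group_of_maps G" and sub: "G \<subseteq> Diff1_plus" and mob: "Mob \<subseteq> G"
    and conf: "\<And>h. h \<in> G2 G \<Longrightarrow> D0 h \<i> = \<i> * D0 h 1"
    and fG: "f \<in> G"
  shows "f \<in> Mob"
proof (cases "f None")
  case None
  then show ?thesis
    using affine_of_G2_conformal[OF assms] affine_map_in_Mob by blast
next
  case (Some p)
  define m where "m = mobius 0 1 (-1) p"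
  have "m \<in> Mob" unfolding m_def by (rule mobius_in_Mob) simp
  then have "m \<circ> f \<in> G" using group_of_maps_comp[OF grp] mob fG by blast
  moreover have "(m \<circ> f) None = None" using Some by (simp add: m_def)
  ultimately obtain \<alpha> \<beta> where "\<alpha> \<noteq> 0" and mf: "m \<circ> f = affine_map \<alpha> \<beta>"
    using affine_of_G2_conformal[OF grp sub mob conf] by blast
  have "mobius p (-1) 1 0 (m x) = x" for x
  proof (cases x)
    case (Some z)
    show ?thesis
    proof (cases "z = p")
      case False
      then have "p - z \<noteq> 0" by simp
      then show ?thesis using Some False by (simp add: m_def field_simps)
    qed (simp add: Some m_def)
  qed (simp add: m_def)
  then have "f = mobius p (-1) 1 0 \<circ> (m \<circ> f)" by (simp add: fun_eq_iff)
  then show ?thesis using inversion_comp_affine_map_in_Mob[OF \<open>\<alpha> \<noteq> 0\<close>] mf by simp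
qed

lemma exists_nonconformal_in_G2:
  assumes "is_group_of_maps G" "G \<subseteq> Diff1_plus" "Mob \<subset> G"
  shows "\<exists>h\<in>G2 G. D0 h \<i> \<noteq> \<i> * D0 h 1"
  using Mob_of_G2_conformal[OF assms(1,2)] assms(3) by blast

lemma uniform_limit_of_continuous_on_prod:
  fixes F :: "real \<Rightarrow> complex \<Rightarrow> complex"
  assumes K: "compact K" and F: "continuous_on (S \<times> K) (\<lambda>p. F (fst p) (snd p))" and t0: "t0 \<in> S"
  shows "uniform_limit K F (F t0) (at t0 within S)"
  unfolding uniform_limit_iff
proof (intro allI impI)
  fix e :: real assume "e > 0"
  have c: "continuous_on (S \<times> K) (\<lambda>(t, w). F t w)"
    using F by (simp add: case_prod_beta)
  obtain X0 where X0: "t0 \<in> X0" "open X0"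
    "\<forall>t\<in>X0 \<inter> S. \<forall>w\<in>K. dist (F t w) (F t0 w) \<le> e / 2"
    using continuous_on_prod_compactE[OF c K t0, of "e / 2"] \<open>e > 0\<close> by auto
  show "\<forall>\<^sub>F t in at t0 within S. \<forall>w\<in>K. dist (F t w) (F t0 w) < e"
    unfolding eventually_at_topological
  proof (intro exI[of _ X0] conjI ballI impI)
    fix t w assume "t \<in> X0" "t \<in> S" "w \<in> K"
    then have "dist (F t w) (F t0 w) \<le> e / 2" using X0(3) by blast
    then show "dist (F t w) (F t0 w) < e" using \<open>e > 0\<close> by simp
  qed (use X0 in auto)
qed

lemma continuous_on_linear_apply:
  fixes L :: "'a::topological_space \<Rightarrow> complex \<Rightarrow> complex"
  assumes "\<And>x. x \<in> S \<Longrightarrow> linear (L x)"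
    and "continuous_on S (\<lambda>x. L x 1)" "continuous_on S (\<lambda>x. L x \<i>)" "continuous_on S f"
  shows "continuous_on S (\<lambda>x. L x (f x))"
proof -
  have "continuous_on S (\<lambda>x. L x (f x))
      \<longleftrightarrow> continuous_on S (\<lambda>x. of_real (Re (f x)) * L x 1 + of_real (Im (f x)) * L x \<i>)"
    by (rule continuous_on_cong[OF refl]) (rule linear_complex_decomp[OF assms(1)])
  also have \<dots> using assms(2-4) by (intro continuous_intros)
  finally show ?thesis .
qed

lemma uniform_limits_of_scaled_composition:
  fixes \<sigma> \<tau> :: "real \<Rightarrow> complex" and P Q :: "complex \<Rightarrow> complex"
  assumes K: "compact K" and t0: "t0 \<in> S"
    and \<sigma>: "continuous_on S \<sigma>" and \<tau>: "continuous_on S \<tau>"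
    and dQ: "\<And>w. Q differentiable (at w)"
    and DQ: "\<And>v. v \<in> {1, \<i>} \<Longrightarrow> continuous_on UNIV (\<lambda>w. frechet_derivative Q (at w) v)"
    and dP: "\<And>z. z \<in> U \<Longrightarrow> P differentiable (at z)"
    and DP: "\<And>v. v \<in> {1, \<i>} \<Longrightarrow> continuous_on U (\<lambda>z. frechet_derivative P (at z) v)"
    and inU: "\<And>t w. w \<in> K \<Longrightarrow> \<tau> t * Q w \<in> U"
  defines "\<Phi> \<equiv> \<lambda>t w. \<sigma> t * P (\<tau> t * Q w)"
  shows "uniform_limit K \<Phi> (\<Phi> t0) (at t0 within S)"
    and "v \<in> {1, \<i>} \<Longrightarrow> uniform_limit K (\<lambda>t w. frechet_derivative (\<Phi> t) (at w) v)
           (\<lambda>w. frechet_derivative (\<Phi> t0) (at w) v) (at t0 within S)"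
proof -
  define inner where "inner p = \<tau> (fst p) * Q (snd p)" for p :: "real \<times> complex"
  have inner_U: "inner ` (S \<times> K) \<subseteq> U" using inU by (auto simp: inner_def)
  have c\<sigma>: "continuous_on (S \<times> K) (\<lambda>p. \<sigma> (fst p))"
    by (rule continuous_on_compose2[OF \<sigma>]) (auto intro!: continuous_intros)
  have c\<tau>: "continuous_on (S \<times> K) (\<lambda>p. \<tau> (fst p))"
    by (rule continuous_on_compose2[OF \<tau>]) (auto intro!: continuous_intros)
  have "continuous_on UNIV Q"
    using dQ by (meson continuous_at_imp_continuous_on differentiable_imp_continuous_within)
  then have "continuous_on (S \<times> K) (\<lambda>p. Q (snd p))"
    by (rule continuous_on_compose2) (auto intro!: continuous_intros)
  then have c_inner: "continuous_on (S \<times> K) inner"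
    unfolding inner_def using c\<tau> by (rule continuous_on_mult[rotated])
  have "continuous_on U P"
    using dP by (meson continuous_at_imp_continuous_on differentiable_imp_continuous_within)
  then have "continuous_on (S \<times> K) (\<lambda>p. P (inner p))"
    by (rule continuous_on_compose2[OF _ c_inner inner_U])
  then have "continuous_on (S \<times> K) (\<lambda>p. \<sigma> (fst p) * P (inner p))"
    by (rule continuous_on_mult[OF c\<sigma>])
  then show "uniform_limit K \<Phi> (\<Phi> t0) (at t0 within S)"
    unfolding \<Phi>_def inner_def by (rule uniform_limit_of_continuous_on_prod[OF K _ t0])
  assume v: "v \<in> {1, \<i>}"
  define DPz where "DPz z = frechet_derivative P (at z)" for z
  define DQw where "DQw w = frechet_derivative Q (at w)" for w
  have deriv: "frechet_derivative (\<Phi> t) (at w) v = \<sigma> t * DPz (inner (t, w)) (\<tau> t * DQw w v)"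
    if "w \<in> K" for t w
  proof -
    have "(Q has_derivative DQw w) (at w)" unfolding DQw_def using dQ frechet_derivative_works by blast
    then have "((\<lambda>w. \<tau> t * Q w) has_derivative (\<lambda>x. \<tau> t * DQw w x)) (at w)"
      by (rule has_derivative_mult_right)
    moreover have "(P has_derivative DPz (\<tau> t * Q w)) (at (\<tau> t * Q w))"
      unfolding DPz_def using dP[OF inU[OF that]] frechet_derivative_works by blast
    ultimately have "(\<Phi> t has_derivative (\<lambda>x. \<sigma> t * DPz (\<tau> t * Q w) (\<tau> t * DQw w x))) (at w)"
      unfolding \<Phi>_def by (intro has_derivative_mult_right) (rule has_derivative_compose)
    then show ?thesis by (simp add: frechet_derivative_at[symmetric] inner_def)
  qed
  have "continuous_on (S \<times> K) (\<lambda>p. DPz (inner p) (\<tau> (fst p) * DQw (snd p) v))"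
  proof (rule continuous_on_linear_apply[where L = "\<lambda>p. DPz (inner p)"])
    show "linear (DPz (inner p))" if "p \<in> S \<times> K" for p
      using dP inner_U that unfolding DPz_def by (blast intro: linear_frechet_derivative)
    have "continuous_on (S \<times> K) (\<lambda>p. DPz (inner p) u)" if "u \<in> {1, \<i>}" for u
      unfolding DPz_def by (rule continuous_on_compose2[OF DP[OF that] c_inner inner_U])
    then show "continuous_on (S \<times> K) (\<lambda>p. DPz (inner p) 1)" "continuous_on (S \<times> K) (\<lambda>p. DPz (inner p) \<i>)"
      by simp_all
    have "continuous_on (S \<times> K) (\<lambda>p. DQw (snd p) v)"
      unfolding DQw_def by (rule continuous_on_compose2[OF DQ[OF v]]) (auto intro!: continuous_intros)
    then show "continuous_on (S \<times> K) (\<lambda>p. \<tau> (fst p) * DQw (snd p) v)"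
      by (rule continuous_on_mult[OF c\<tau>])
  qed
  then have "continuous_on (S \<times> K) (\<lambda>p. \<sigma> (fst p) * DPz (inner (fst p, snd p)) (\<tau> (fst p) * DQw (snd p) v))"
    by (simp add: continuous_on_mult[OF c\<sigma>])
  then have "uniform_limit K (\<lambda>t w. \<sigma> t * DPz (inner (t, w)) (\<tau> t * DQw w v))
      (\<lambda>w. \<sigma> t0 * DPz (inner (t0, w)) (\<tau> t0 * DQw w v)) (at t0 within S)"
    by (rule uniform_limit_of_continuous_on_prod[OF K _ t0])
  then show "uniform_limit K (\<lambda>t w. frechet_derivative (\<Phi> t) (at w) v)
      (\<lambda>w. frechet_derivative (\<Phi> t0) (at w) v) (at t0 within S)"
    by (subst uniform_limit_cong'[OF deriv deriv]) auto
qed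

definition conjugated_scaling :: "complex \<Rightarrow> complex \<Rightarrow> (sphere \<Rightarrow> sphere) \<Rightarrow> sphere \<Rightarrow> sphere" where
  "conjugated_scaling \<gamma> \<rho> h = scaling \<gamma> \<circ> inv h \<circ> scaling \<rho> \<circ> h"

lemma pole_fixing_conjugated_scaling:
  "pole_fixing h \<Longrightarrow> \<gamma> \<noteq> 0 \<Longrightarrow> \<rho> \<noteq> 0 \<Longrightarrow> pole_fixing (conjugated_scaling \<gamma> \<rho> h)"
  unfolding conjugated_scaling_def by (intro pole_fixing_comp pole_fixing_scaling pole_fixing_inv)

lemma conjugated_scaling_in_G2:
  assumes "is_group_of_maps G" "Mob \<subseteq> G" "h \<in> G" "pole_fixing h" "\<gamma> \<noteq> 0" "\<rho> \<noteq> 0"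
  shows "conjugated_scaling \<gamma> \<rho> h \<in> G2 G"
proof (rule pole_fixing_imp_G2)
  show "conjugated_scaling \<gamma> \<rho> h \<in> G"
    unfolding conjugated_scaling_def
    using assms(2,3,5,6) scaling_in_Mob group_of_maps_comp[OF assms(1)] group_of_maps_inv[OF assms(1)]
    by (meson subsetD)
qed (use assms pole_fixing_conjugated_scaling in blast)

lemma conjugated_scaling_1_1: "bij h \<Longrightarrow> conjugated_scaling 1 1 h = id"
  by (simp add: conjugated_scaling_def comp_assoc bij_def)

lemma D0_conjugated_scaling:
  assumes h: "h \<in> Diff1_plus" and ih: "inv h \<in> Diff1_plus" and k: "pole_fixing h"
    and "\<rho> \<noteq> 0"
  shows "D0 (conjugated_scaling \<gamma> \<rho> h) = (\<lambda>v. \<gamma> * D0 (inv h) (\<rho> * D0 h v))"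
proof -
  have "(locrep True True (conjugated_scaling \<gamma> \<rho> h) has_derivative
      (\<lambda>w. \<gamma> * w) \<circ> D0 (inv h) \<circ> (\<lambda>w. \<rho> * w) \<circ> D0 h) (at 0)"
    unfolding conjugated_scaling_def
    by (intro has_derivative_locrep_comp has_derivative_D0 has_derivative_locrep_scaling
        pole_fixing_inv pole_fixing_scaling h ih k \<open>\<rho> \<noteq> 0\<close>)
  then show ?thesis by (simp add: D0_eqI o_def)
qed

lemma jdet_D0_conjugated_scaling:
  assumes h: "h \<in> Diff1_plus" and ih: "inv h \<in> Diff1_plus" and k: "pole_fixing h"
    and "\<rho> \<noteq> 0"
  shows "jdet (D0 (conjugated_scaling \<gamma> \<rho> h)) = (cmod \<gamma> * cmod \<rho>)\<^sup>2"
proof -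
  have lin: "linear (D0 h)" "linear (D0 (inv h))"
    using linear_D0 h ih k pole_fixing_inv by blast+
  have lin_mult: "linear (\<lambda>w. c * w)" for c :: complex
    by (rule bounded_linear.linear[OF bounded_linear_mult_right])
  have "jdet (D0 (inv h)) * jdet (D0 h) = 1"
    using jdet_compose[OF lin(2,1)] D0_inv_comp[OF h ih k] by (simp add: jdet_def)
  moreover have "D0 (conjugated_scaling \<gamma> \<rho> h) = (\<lambda>w. \<gamma> * w) \<circ> (D0 (inv h) \<circ> ((\<lambda>w. \<rho> * w) \<circ> D0 h))"
    using D0_conjugated_scaling[OF assms] by (simp add: o_def)
  ultimately show ?thesis
    using lin lin_mult
    by (simp add: jdet_compose linear_compose jdet_mult_left power_mult_distrib)
qed

definition chart_scale :: "bool \<Rightarrow> complex \<Rightarrow> complex" where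
  "chart_scale b c = (if b then c else inverse c)"

lemma chart_scaling: "c \<noteq> 0 \<Longrightarrow> chart b (scaling c y) = chart_scale b c * chart b y"
  by (cases b; cases y) (auto simp: chart_scale_def field_simps)

lemma cinv_chart_scaling:
  "c \<noteq> 0 \<Longrightarrow> x \<in> cdom a \<Longrightarrow> cinv a (chart_scale a c * chart a x) = scaling c x"
  by (cases a; cases x) (auto simp: chart_scale_def field_simps)

lemma locrep_conjugated_scaling:
  assumes "pole_fixing h" "\<gamma> \<noteq> 0" "\<rho> \<noteq> 0"
  shows "locrep a b (conjugated_scaling \<gamma> \<rho> h)
       = (\<lambda>w. chart_scale b \<gamma> * locrep a b (inv h) (chart_scale a \<rho> * locrep a a h w))"
  unfolding locrep_def conjugated_scaling_def o_def
  using cinv_chart_scaling[OF assms(3) pole_fixing_cinv_in_cdom[OF assms(1)]] chart_scaling[OF assms(2)]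
  by simp

lemma C1_continuous_on_conjugated_scaling:
  assumes h: "h \<in> Diff1_plus" and ih: "inv h \<in> Diff1_plus" and k: "pole_fixing h"
    and \<gamma>: "continuous_on S \<gamma>" "\<And>t. \<gamma> t \<noteq> 0" and \<rho>: "continuous_on S \<rho>" "\<And>t. \<rho> t \<noteq> 0"
  shows "C1_continuous_on S (\<lambda>t. conjugated_scaling (\<gamma> t) (\<rho> t) h)"
  unfolding C1_continuous_on_def
proof (intro ballI allI impI conjI)
  fix t0 a b K
  assume t0: "t0 \<in> S" and "compact K \<and> K \<subseteq> repdom a b (conjugated_scaling (\<gamma> t0) (\<rho> t0) h)"
  then have K: "compact K" "K \<subseteq> chart_overlap a b"
    using repdom_pole_fixing pole_fixing_conjugated_scaling k \<gamma>(2) \<rho>(2) by auto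
  then show "\<forall>\<^sub>F t in at t0 within S. K \<subseteq> repdom a b (conjugated_scaling (\<gamma> t) (\<rho> t) h)"
    using repdom_pole_fixing pole_fixing_conjugated_scaling k \<gamma>(2) \<rho>(2) by auto
  have chart_scale_cont: "continuous_on S (\<lambda>t. chart_scale c (f t))"
    if "continuous_on S f" "\<And>t. f t \<noteq> 0" for c f
    using that unfolding chart_scale_def by (cases c) (auto intro!: continuous_intros)
  have rdQ: "repdom a a h = UNIV" and rdP: "repdom a b (inv h) = chart_overlap a b"
    using repdom_pole_fixing k pole_fixing_inv by (auto simp: chart_overlap_def)
  have inU: "chart_scale a (\<rho> t) * locrep a a h w \<in> chart_overlap a b" if "w \<in> K" for t w
    using that K(2) locrep_diag_nonzero[OF k] \<rho>(2)
    by (auto simp: chart_overlap_def chart_scale_def)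
  have dQ: "locrep a a h differentiable (at w)" for w
    using Diff1_plusD(2)[OF h, of w a a] rdQ by simp
  have DQ: "continuous_on UNIV (\<lambda>w. frechet_derivative (locrep a a h) (at w) v)"
    if "v \<in> {1, \<i>}" for v
    using Diff1_plusD(3)[OF h that, of a a] rdQ by simp
  have dP: "locrep a b (inv h) differentiable (at z)" if "z \<in> chart_overlap a b" for z
    using Diff1_plusD(2)[OF ih, of z a b] rdP that by simp
  have DP: "continuous_on (chart_overlap a b) (\<lambda>z. frechet_derivative (locrep a b (inv h)) (at z) v)"
    if "v \<in> {1, \<i>}" for v
    using Diff1_plusD(3)[OF ih that, of a b] rdP by simp
  note limits = uniform_limits_of_scaled_composition[OF K(1) t0
      chart_scale_cont[OF \<gamma>] chart_scale_cont[OF \<rho>] dQ DQ dP DP inU]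
  have loc: "locrep a b (conjugated_scaling (\<gamma> t) (\<rho> t) h)
       = (\<lambda>w. chart_scale b (\<gamma> t) * locrep a b (inv h) (chart_scale a (\<rho> t) * locrep a a h w))" for t
    using locrep_conjugated_scaling[OF k \<gamma>(2) \<rho>(2)] .
  show "uniform_limit K (\<lambda>t. locrep a b (conjugated_scaling (\<gamma> t) (\<rho> t) h))
      (locrep a b (conjugated_scaling (\<gamma> t0) (\<rho> t0) h)) (at t0 within S)"
    unfolding loc by (rule limits(1)) auto
  show "uniform_limit K (\<lambda>t w. frechet_derivative (locrep a b (conjugated_scaling (\<gamma> t) (\<rho> t) h)) (at w) v)
      (\<lambda>w. frechet_derivative (locrep a b (conjugated_scaling (\<gamma> t0) (\<rho> t0) h)) (at w) v)
      (at t0 within S)" if "v \<in> {1, \<i>}" for v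
    unfolding loc by (rule limits(2)) (use that in auto)
qed

section \<open>The saddle path\<close>

lemma exists_diagonal_in_G2:
  assumes grp: "is_group_of_maps G" and sub: "G \<subseteq> Diff1_plus" and mob: "Mob \<subseteq> G"
    and h0: "h0 \<in> G2 G" and nc: "D0 h0 \<i> \<noteq> \<i> * D0 h0 1"
  shows "\<exists>h a d. h \<in> G2 G \<and> 0 < a \<and> a < d \<and> D0 h 1 = of_real a \<and> D0 h \<i> = \<i> * of_real d"
proof -
  have k0: "pole_fixing h0" using G2_imp_pole_fixing[OF sub h0] .
  have hD: "h0 \<in> Diff1_plus" using h0 sub by (auto simp: G2_def)
  obtain \<alpha> \<beta> a d where "\<alpha> \<noteq> 0" "\<beta> \<noteq> 0" "0 < a" "a < d"
    and diag: "\<alpha> * D0 h0 \<beta> = of_real a" "\<alpha> * D0 h0 (\<beta> * \<i>) = \<i> * of_real d"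
    using nonconformal_diagonalizable[OF linear_D0[OF hD k0] jdet_D0_pos[OF hD k0] nc] by blast
  define h where "h = scaling \<alpha> \<circ> h0 \<circ> scaling \<beta>"
  have "scaling \<alpha> \<in> G" "scaling \<beta> \<in> G" "h0 \<in> G"
    using mob scaling_in_Mob \<open>\<alpha> \<noteq> 0\<close> \<open>\<beta> \<noteq> 0\<close> h0 by (auto simp: G2_def)
  then have "h \<in> G" unfolding h_def by (intro group_of_maps_comp[OF grp])
  moreover have "pole_fixing h"
    unfolding h_def using k0 \<open>\<alpha> \<noteq> 0\<close> \<open>\<beta> \<noteq> 0\<close> by (intro pole_fixing_comp pole_fixing_scaling)
  ultimately have "h \<in> G2 G" by (rule pole_fixing_imp_G2)
  have "(locrep True True h has_derivative (\<lambda>w. \<alpha> * w) \<circ> D0 h0 \<circ> (\<lambda>w. \<beta> * w)) (at 0)"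
    unfolding h_def using k0 \<open>\<beta> \<noteq> 0\<close>
    by (intro has_derivative_locrep_comp has_derivative_D0 has_derivative_locrep_scaling
        pole_fixing_comp pole_fixing_scaling hD)
  then have "D0 h v = \<alpha> * D0 h0 (\<beta> * v)" for v by (simp add: D0_eqI)
  then show ?thesis using \<open>h \<in> G2 G\<close> \<open>0 < a\<close> \<open>a < d\<close> diag by auto
qed

lemma Complex_cos_scaled_sin_nonzero: "\<kappa> \<noteq> 0 \<Longrightarrow> Complex (cos \<theta>) (\<kappa> * sin \<theta>) \<noteq> 0"
  by (auto simp: complex_eq_iff) (metis sin_cos_squared_add3 mult_zero_left add_0 zero_neq_one)

lemma norm_Complex_cos_scaled_sin_lt_1:
  assumes "\<bar>\<kappa>\<bar> < 1" "sin \<theta> \<noteq> 0"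
  shows "cmod (Complex (cos \<theta>) (\<kappa> * sin \<theta>)) < 1"
proof -
  have "\<kappa>\<^sup>2 * (sin \<theta>)\<^sup>2 < (sin \<theta>)\<^sup>2"
    using assms by (simp add: abs_square_less_1)
  then have "(cos \<theta>)\<^sup>2 + (\<kappa> * sin \<theta>)\<^sup>2 < 1"
    using sin_cos_squared_add[of \<theta>] power_mult_distrib[of \<kappa> "sin \<theta>" 2] by linarith
  then show ?thesis by (simp add: cmod_def)
qed

lemma D0_conjugated_rotation:
  fixes a d \<theta> :: real
  assumes h: "h \<in> Diff1_plus" and ih: "inv h \<in> Diff1_plus" and k: "pole_fixing h"
    and D1: "D0 h 1 = of_real a" and Di: "D0 h \<i> = \<i> * of_real d" and "0 < a" "0 < d"
  defines "w \<equiv> Complex (cos \<theta>) (a / d * sin \<theta>)"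
  defines "g \<equiv> conjugated_scaling (cnj w / of_real (cmod w)) (cis \<theta>) h"
  shows "D0 g 1 = of_real (cmod w)" and "jdet (D0 g) = 1"
    and "\<theta> = pi / 2 \<Longrightarrow> D0 g \<i> = \<i> * of_real (d / a)"
proof -
  have "w \<noteq> 0"
    unfolding w_def using \<open>0 < a\<close> \<open>0 < d\<close> by (intro Complex_cos_scaled_sin_nonzero) simp
  have Dh: "D0 h x = of_real (Re x) * of_real a + of_real (Im x) * (\<i> * of_real d)" for x
    using linear_complex_decomp[OF linear_D0[OF h k], of x] by (simp add: D1 Di)
  have Dinv: "D0 (inv h) (D0 h x) = x" for x
    using D0_inv_comp[OF h ih k] by (simp add: fun_eq_iff)
  have Dg: "D0 g v = cnj w / of_real (cmod w) * D0 (inv h) (cis \<theta> * D0 h v)" for v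
    unfolding g_def by (simp add: D0_conjugated_scaling[OF h ih k])
  have "cis \<theta> * D0 h 1 = D0 h w"
    unfolding Dh w_def using \<open>0 < d\<close> by (simp add: D1 complex_eq_iff cis.code)
  then have "D0 g 1 = cnj w / of_real (cmod w) * w" by (simp add: Dg Dinv)
  also have "\<dots> = of_real (cmod w)"
    using \<open>w \<noteq> 0\<close> complex_norm_square[of w] by (simp add: field_simps power2_eq_square mult.commute)
  finally show "D0 g 1 = of_real (cmod w)" .
  show "jdet (D0 g) = 1"
    unfolding g_def using \<open>w \<noteq> 0\<close>
    by (simp add: jdet_D0_conjugated_scaling[OF h ih k] norm_divide)
  assume \<theta>: "\<theta> = pi / 2"
  have w: "w = \<i> * of_real (a / d)" unfolding w_def \<theta> by (simp add: complex_eq_iff)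
  moreover have "cmod w = a / d" using \<open>0 < a\<close> \<open>0 < d\<close> by (simp add: w norm_mult norm_divide)
  moreover have "cis \<theta> * D0 h \<i> = D0 h (- of_real (d / a))"
    using \<open>0 < a\<close> unfolding Dh \<theta> by (simp add: Di complex_eq_iff)
  ultimately show "D0 g \<i> = \<i> * of_real (d / a)"
    using \<open>0 < a\<close> \<open>0 < d\<close> by (simp add: Dg Dinv)
qed

lemma saddle_path_in_G2:
  fixes a d :: real
  assumes grp: "is_group_of_maps G" and sub: "G \<subseteq> Diff1_plus" and mob: "Mob \<subseteq> G"
    and hG2: "h \<in> G2 G" and "0 < a" "a < d"
    and D1: "D0 h 1 = of_real a" and Di: "D0 h \<i> = \<i> * of_real d"
  shows "\<exists>g :: real \<Rightarrow> sphere \<Rightarrow> sphere.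
           (\<forall>t\<in>{0..1}. g t \<in> G2 G) \<and> g 0 = id \<and> C1_continuous_on {0..1} g
         \<and> (\<forall>t\<in>{0<..1}. \<exists>\<mu>::real. 0 < \<mu> \<and> \<mu> < 1
               \<and> D0 (g t) 1 = complex_of_real \<mu>
               \<and> (\<exists>v. v \<noteq> 0 \<and> D0 (g t) v = complex_of_real (1 / \<mu>) * v))
         \<and> D0 (g 1) 1 = complex_of_real (a / d)
         \<and> D0 (g 1) \<i> = complex_of_real (1 / (a / d)) * \<i>"
proof -
  have hG: "h \<in> G" and k: "pole_fixing h" using hG2 G2_imp_pole_fixing[OF sub] by (auto simp: G2_def)
  have ihG: "inv h \<in> G" using group_of_maps_inv[OF grp hG] .
  have h: "h \<in> Diff1_plus" and ih: "inv h \<in> Diff1_plus" using hG ihG sub by auto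
  define w where "w t = Complex (cos (t * pi / 2)) (a / d * sin (t * pi / 2))" for t
  define \<gamma> where "\<gamma> t = cnj (w t) / of_real (cmod (w t))" for t
  define \<rho> where "\<rho> t = cis (t * pi / 2)" for t
  define g where "g t = conjugated_scaling (\<gamma> t) (\<rho> t) h" for t
  have "w t \<noteq> 0" for t unfolding w_def using \<open>0 < a\<close> \<open>a < d\<close> by (intro Complex_cos_scaled_sin_nonzero) simp
  then have \<gamma>0: "\<gamma> t \<noteq> 0" and \<rho>0: "\<rho> t \<noteq> 0" for t by (simp_all add: \<gamma>_def \<rho>_def)
  have "0 < d" using \<open>0 < a\<close> \<open>a < d\<close> by simp
  note D0_rot = D0_conjugated_rotation[OF h ih k D1 Di \<open>0 < a\<close> \<open>0 < d\<close>, of "t * pi / 2" for t,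
      folded w_def \<gamma>_def \<rho>_def g_def]
  have g_G2: "g t \<in> G2 G" for t
    unfolding g_def using conjugated_scaling_in_G2[OF grp mob hG k \<gamma>0 \<rho>0] .
  have "w 0 = 1" by (simp add: w_def complex_eq_iff)
  then have "g 0 = id"
    by (simp add: g_def \<gamma>_def \<rho>_def conjugated_scaling_1_1 Diff1_plusD(1)[OF h])
  moreover have "C1_continuous_on {0..1} g"
    unfolding g_def using \<open>\<And>t. w t \<noteq> 0\<close> \<open>0 < a\<close> \<open>a < d\<close>
    by (intro C1_continuous_on_conjugated_scaling h ih k \<gamma>0 \<rho>0)
      (auto simp: \<gamma>_def \<rho>_def w_def cis_conv_exp intro!: continuous_intros)
  moreover have "\<exists>\<mu>::real. 0 < \<mu> \<and> \<mu> < 1 \<and> D0 (g t) 1 = complex_of_real \<mu>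
      \<and> (\<exists>v. v \<noteq> 0 \<and> D0 (g t) v = complex_of_real (1 / \<mu>) * v)" if t: "t \<in> {0<..1}" for t
  proof (rule exI, intro conjI)
    have "sin (t * pi / 2) \<noteq> 0" using t by (intro sin_gt_zero[THEN less_imp_neq, symmetric]) auto
    then show "cmod (w t) < 1"
      unfolding w_def using \<open>0 < a\<close> \<open>a < d\<close> by (intro norm_Complex_cos_scaled_sin_lt_1) auto
    show "0 < cmod (w t)" using \<open>w t \<noteq> 0\<close> by simp
    show "D0 (g t) 1 = of_real (cmod (w t))" by (rule D0_rot(1))
    have "linear (D0 (g t))"
      using g_G2 sub G2_imp_pole_fixing by (intro linear_D0) (auto simp: G2_def)
    then show "\<exists>v. v \<noteq> 0 \<and> D0 (g t) v = complex_of_real (1 / cmod (w t)) * v"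
      using D0_rot(1,2) \<open>w t \<noteq> 0\<close> \<open>cmod (w t) < 1\<close>
      by (intro eigenvector_of_real_first_column) auto
  qed
  moreover have "cmod (w 1) = a / d" using \<open>0 < a\<close> \<open>a < d\<close> by (simp add: w_def cmod_def)
  then have "D0 (g 1) 1 = of_real (a / d) \<and> D0 (g 1) \<i> = of_real (1 / (a / d)) * \<i>"
    using D0_rot(1)[of 1] D0_rot(3)[of 1] by simp
  ultimately show ?thesis using g_G2 by blast
qed

theorem mainTheorem6:
  fixes G :: "(sphere \<Rightarrow> sphere) set"
  assumes "is_group_of_maps G" and "G \<subseteq> Diff1_plus" and "Mob \<subset> G"
  shows "\<exists>(lam::real) (g :: real \<Rightarrow> sphere \<Rightarrow> sphere).
           0 < lam \<and> lam < 1
         \<and> (\<forall>t\<in>{0..1}. g t \<in> G2 G) \<and> g 0 = id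
         \<and> C1_continuous_on {0..1} g
         \<and> (\<forall>t\<in>{0<..1}. \<exists>\<mu>::real. 0 < \<mu> \<and> \<mu> < 1
               \<and> D0 (g t) 1 = complex_of_real \<mu>
               \<and> (\<exists>v. v \<noteq> 0 \<and> D0 (g t) v = complex_of_real (1 / \<mu>) * v))
         \<and> D0 (g 1) 1 = complex_of_real lam
         \<and> D0 (g 1) \<i> = complex_of_real (1 / lam) * \<i>"
proof -
  have mob: "Mob \<subseteq> G" using assms(3) by blast
  obtain h0 where "h0 \<in> G2 G" "D0 h0 \<i> \<noteq> \<i> * D0 h0 1"
    using exists_nonconformal_in_G2[OF assms] by blast
  then obtain h a d where "h \<in> G2 G" "0 < a" "a < d"
    and "D0 h 1 = of_real a" "D0 h \<i> = \<i> * of_real d"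
    using exists_diagonal_in_G2[OF assms(1,2) mob] by blast
  then have "0 < a / d" "a / d < 1" by simp_all
  then show ?thesis
    using saddle_path_in_G2[OF assms(1,2) mob \<open>h \<in> G2 G\<close> \<open>0 < a\<close> \<open>a < d\<close>
        \<open>D0 h 1 = of_real a\<close> \<open>D0 h \<i> = \<i> * of_real d\<close>] by blast
qed

end
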